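(* With $\mathbf B$ as below, for $A>0$ and $\varepsilon>0$ define $\psi^A_\varepsilon=\exp(-A\mathbf 1_{\mathbf B^c}/\varepsilon^2)$ on $[0,T]\times\overline{\mathcal O}$, $u^A_\varepsilon(t,x)=\inf_{\theta\in\mathcal T_t}E[\psi^A_\varepsilon(\theta,X^{t,x,\varepsilon}_\theta)]$, $v^A_\varepsilon=-\varepsilon^2\ln u^A_\varepsilon$, $u_\varepsilon(t,x)=P[\sup_{s\in[t,T]}|X^{t,x,\varepsilon}_s-g_0(s)|<r]$ and $v_\varepsilon=-\varepsilon^2\ln u_\varepsilon$ (with $-\ln0=+\infty$). Then for all $A>0$ and all $(t,x)\in[0,T]\times\overline{\mathcal O}$, $$\limsup_{\varepsilon\to0}v^A_\varepsilon(t,x)=A\wedge\limsup_{\varepsilon\to0}v_\varepsilon(t,x).$$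
   Context: Setting: $\mathcal O\subset\mathbb R^d$ bounded open of class $W^{2,\infty}$; $\gamma$ Lipschitz with $\gamma\cdot n\ge c_0>0$ on $\partial\mathcal O$; $b_\varepsilon,\sigma_\varepsilon$ continuous, Lipschitz in space uniformly in time. $X^{t,x,\varepsilon}$ is the strong solution on $[t,T]$ of the reflected SDE $dX_s=b_\varepsilon(s,X_s)ds+\varepsilon\sigma_\varepsilon(s,X_s)dW_s-dk_s$, $X_s\in\overline{\mathcal O}$, $k_s=\int_t^s1_{\partial\mathcal O}(X_u)\gamma(X_u)d|k|_u$, $X_t=x$. $\mathcal T_t$: stopping times with values in $[t,T]$. Fix $g_0\in C([0,T];\overline{\mathcal O})$, $r>0$ and $\mathbf B=\{(s,y)\in[0,T]\times\overline{\mathcal O}:|y-g_0(s)|<r\}$, $\mathbf B^c$ its complement in $[0,T]\times\overline{\mathcal O}$. *)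

theory Defs
  imports "HOL-Probability.Probability"
begin

text \<open>Bounded open domain of class W^{2,infinity}: near each boundary point it is the strict
  sublevel set of a function with nonvanishing, Lipschitz gradient (W^{2,infinity} on a ball
  is the same as C^1 with Lipschitz gradient).\<close>
definition W2inf_domain :: "(real^'n) set \<Rightarrow> bool" where
  "W2inf_domain Om \<longleftrightarrow> open Om \<and> bounded Om \<and>
     (\<forall>z\<in>frontier Om. \<exists>\<delta>>0. \<exists>\<rho> D L.
        (\<forall>y\<in>ball z \<delta>. (\<rho> has_derivative (\<lambda>h. D y \<bullet> h)) (at y)) \<and>
        L-lipschitz_on (ball z \<delta>) D \<and> (\<forall>y\<in>ball z \<delta>. D y \<noteq> 0) \<and>
        Om \<inter> ball z \<delta> = {y\<in>ball z \<delta>. \<rho> y < 0})"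

definition unit_outward_normal :: "(real^'n) set \<Rightarrow> real^'n \<Rightarrow> real^'n \<Rightarrow> bool" where
  "unit_outward_normal Om y \<nu> \<longleftrightarrow> y \<in> frontier Om \<and>
     (\<exists>\<delta>>0. \<exists>\<rho> D.
        (\<forall>w\<in>ball y \<delta>. (\<rho> has_derivative (\<lambda>h. D w \<bullet> h)) (at w)) \<and>
        continuous_on (ball y \<delta>) D \<and> D y \<noteq> 0 \<and>
        Om \<inter> ball y \<delta> = {w\<in>ball y \<delta>. \<rho> w < 0} \<and> \<nu> = D y /\<^sub>R norm (D y))"

definition variation_sums :: "(real \<Rightarrow> 'v::real_normed_vector) \<Rightarrow> real \<Rightarrow> real \<Rightarrow> real set" where
  "variation_sums f a c =
     {(\<Sum>i<n. norm (f (p (Suc i)) - f (p i))) | p n. p 0 = a \<and> p n = c \<and> (\<forall>i<n. p i \<le> p (Suc i))}"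

definition variation_on :: "(real \<Rightarrow> 'v::real_normed_vector) \<Rightarrow> real \<Rightarrow> real \<Rightarrow> real" where
  "variation_on f a c = Sup (variation_sums f a c)"

definition bounded_variation :: "(real \<Rightarrow> 'v::real_normed_vector) \<Rightarrow> real \<Rightarrow> real \<Rightarrow> bool" where
  "bounded_variation f a c \<longleftrightarrow> bdd_above (variation_sums f a c)"

definition brownian_motion ::
  "'a measure \<Rightarrow> (real \<Rightarrow> 'a measure) \<Rightarrow> ('a \<Rightarrow> real \<Rightarrow> real^'m) \<Rightarrow> bool" where
  "brownian_motion M F W \<longleftrightarrow>
     (\<forall>\<omega>\<in>space M. W \<omega> 0 = 0 \<and> continuous_on {0..} (W \<omega>)) \<and>
     (\<forall>s\<ge>0. (\<lambda>\<omega>. W \<omega> s) \<in> borel_measurable (F s)) \<and>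
     (\<forall>s u. 0 \<le> s \<and> s < u \<longrightarrow>
        prob_space.indep_vars M (\<lambda>_. borel) (\<lambda>i \<omega>. (W \<omega> u - W \<omega> s) $ i) UNIV \<and>
        (\<forall>i. distributed M lborel (\<lambda>\<omega>. (W \<omega> u - W \<omega> s) $ i) (normal_density 0 (sqrt (u - s)))) \<and>
        (\<forall>A\<in>sets (F s). \<forall>C\<in>sets borel.
           measure M (A \<inter> {\<omega>\<in>space M. W \<omega> u - W \<omega> s \<in> C}) =
           measure M A * measure M {\<omega>\<in>space M. W \<omega> u - W \<omega> s \<in> C}))"

text \<open>I is the Ito integral of the continuous adapted integrand H against W on [t,T]:
  for each s in [t,T], I s is the limit in probability of the left-point Riemann sums over
  uniform partitions of [t,s].\<close>
definition ito_integral ::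
  "'a measure \<Rightarrow> ('a \<Rightarrow> real \<Rightarrow> real^'m) \<Rightarrow> (real \<Rightarrow> 'a \<Rightarrow> real^'m^'n) \<Rightarrow> real \<Rightarrow> real
     \<Rightarrow> ('a \<Rightarrow> real \<Rightarrow> real^'n) \<Rightarrow> bool" where
  "ito_integral M W H t T I \<longleftrightarrow>
     (\<forall>s\<in>{t..T}. \<forall>\<delta>>0.
        (\<lambda>n. measure M {\<omega>\<in>space M.
            norm ((\<Sum>j<n. H (t + real j * (s - t) / real n) \<omega> *v
                   (W \<omega> (t + real (Suc j) * (s - t) / real n) - W \<omega> (t + real j * (s - t) / real n)))
                  - I \<omega> s) > \<delta>}) \<longlonglongrightarrow> 0)"

text \<open>X is a strong solution on [t,T] of
  dX = b(s,X) ds + eps sigma(s,X) dW - dk, X in closure Om, k = int 1_{boundary Om}(X) gamma(X) d|k|, X_t = x.\<close>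
definition reflected_sde_solution ::
  "'a measure \<Rightarrow> (real \<Rightarrow> 'a measure) \<Rightarrow> ('a \<Rightarrow> real \<Rightarrow> real^'m) \<Rightarrow> (real^'n) set
   \<Rightarrow> (real^'n \<Rightarrow> real^'n) \<Rightarrow> (real \<Rightarrow> real^'n \<Rightarrow> real^'n) \<Rightarrow> (real \<Rightarrow> real^'n \<Rightarrow> real^'m^'n)
   \<Rightarrow> real \<Rightarrow> real \<Rightarrow> real \<Rightarrow> real^'n \<Rightarrow> ('a \<Rightarrow> real \<Rightarrow> real^'n) \<Rightarrow> bool" where
  "reflected_sde_solution M F W Om \<gamma> b \<sigma> \<epsilon> t T x X \<longleftrightarrow>
     (\<forall>s\<in>{t..T}. (\<lambda>\<omega>. X \<omega> s) \<in> borel_measurable (F s)) \<and>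
     (\<forall>\<omega>\<in>space M. continuous_on {t..T} (X \<omega>) \<and> X \<omega> t = x \<and> (\<forall>s\<in>{t..T}. X \<omega> s \<in> closure Om)) \<and>
     (\<exists>k I.
        (\<forall>s\<in>{t..T}. (\<lambda>\<omega>. k \<omega> s) \<in> borel_measurable (F s)) \<and>
        (\<forall>\<omega>\<in>space M. continuous_on {t..T} (k \<omega>) \<and> k \<omega> t = 0 \<and> bounded_variation (k \<omega>) t T) \<and>
        (AE \<omega> in M. \<forall>s\<in>{t..T}.
           k \<omega> s = integral\<^sup>L (interval_measure (\<lambda>u. variation_on (k \<omega>) t (min T (max t u))))
                      (\<lambda>u. indicator {t<..s} u *\<^sub>R (indicator (frontier Om) (X \<omega> u) *\<^sub>R \<gamma> (X \<omega> u)))) \<and>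
        ito_integral M W (\<lambda>u \<omega>. \<sigma> u (X \<omega> u)) t T I \<and>
        (AE \<omega> in M. \<forall>s\<in>{t..T}.
           X \<omega> s = x + integral {t..s} (\<lambda>u. b u (X \<omega> u)) + \<epsilon> *\<^sub>R I \<omega> s - k \<omega> s))"

definition tube :: "real \<Rightarrow> (real^'n) set \<Rightarrow> (real \<Rightarrow> real^'n) \<Rightarrow> real \<Rightarrow> (real \<times> (real^'n)) set" where
  "tube T Om g0 r = {(s, y). s \<in> {0..T} \<and> y \<in> closure Om \<and> norm (y - g0 s) < r}"

definition tube_compl :: "real \<Rightarrow> (real^'n) set \<Rightarrow> (real \<Rightarrow> real^'n) \<Rightarrow> real \<Rightarrow> (real \<times> (real^'n)) set" where
  "tube_compl T Om g0 r = ({0..T} \<times> closure Om) - tube T Om g0 r"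

definition psiA :: "real \<Rightarrow> (real^'n) set \<Rightarrow> (real \<Rightarrow> real^'n) \<Rightarrow> real \<Rightarrow> real \<Rightarrow> real \<Rightarrow> real \<times> (real^'n) \<Rightarrow> real" where
  "psiA T Om g0 r A \<epsilon> p = exp (- A * indicator (tube_compl T Om g0 r) p / \<epsilon>\<^sup>2)"

definition stopping_times_in :: "'a measure \<Rightarrow> (real \<Rightarrow> 'a measure) \<Rightarrow> real \<Rightarrow> real \<Rightarrow> ('a \<Rightarrow> real) set" where
  "stopping_times_in M F t T = {\<theta>. stopping_time F \<theta> \<and> (\<forall>\<omega>\<in>space M. t \<le> \<theta> \<omega> \<and> \<theta> \<omega> \<le> T)}"

definition neg_log_scaled :: "real \<Rightarrow> real \<Rightarrow> ereal" where
  "neg_log_scaled \<epsilon> u = (if u = 0 then \<infinity> else ereal (- \<epsilon>\<^sup>2 * ln u))"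

end

theory Submission
  imports Defs
begin

text \<open>
  For fixed e > 0 the payoff psiA takes only two values: 1 inside the tube B and
  a = exp(-A/e^2) outside. Hence for every stopping time theta the expected payoff is at least
  a + (1-a) u_e, where u_e is the probability that the path stays in the tube on [t,T]; and
  the first exit time from the tube (capped at T), a stopping time because the paths are
  continuous and adapted, attains this bound. So u^A_e = a + (1-a) u_e exactly.
  An elementary estimate then gives
    min A v_e - e^2 ln 2 <= v^A_e <= min A v_e,
  and since e^2 ln 2 -> 0 and truncation by A commutes with limsup, the theorem follows.
\<close>

lemma neg_log_scaled_antimono:
  assumes "0 \<le> u" "u \<le> v"
  shows "neg_log_scaled e v \<le> neg_log_scaled e u"
proof (cases "u = 0")
  case False
  then have "ln u \<le> ln v" using assms by simp
  then show ?thesis using False assms by (simp add: neg_log_scaled_def mult_left_mono)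
qed (simp add: neg_log_scaled_def)

lemma neg_log_scaled_exp:
  assumes "e \<noteq> 0"
  shows "neg_log_scaled e (exp (- A / e\<^sup>2)) = ereal A"
  using assms by (simp add: neg_log_scaled_def)

lemma neg_log_scaled_double:
  assumes "0 < v"
  shows "neg_log_scaled e (2 * v) + ereal (e\<^sup>2 * ln 2) = neg_log_scaled e v"
  using assms by (simp add: neg_log_scaled_def ln_mult algebra_simps)

text \<open>For a = exp(-A/e^2), the mixture a + (1-a) u dominates both a and u, so its scaled
  negative logarithm is at most min A (-e^2 ln u).\<close>
lemma neg_log_scaled_mix_upper:
  fixes e A u :: real
  assumes e: "e \<noteq> 0" and A: "0 \<le> A" and u: "0 \<le> u" "u \<le> 1"
  defines "a \<equiv> exp (- A / e\<^sup>2)"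
  shows "neg_log_scaled e (a + (1 - a) * u) \<le> min (ereal A) (neg_log_scaled e u)"
proof -
  have a: "0 < a" "a \<le> 1" using A unfolding a_def by auto
  have na: "neg_log_scaled e a = ereal A" unfolding a_def by (rule neg_log_scaled_exp[OF e])
  have "a \<le> a + (1 - a) * u" "u \<le> a + (1 - a) * u"
    using a u mult_left_le_one_le[of u a] by (auto simp: algebra_simps)
  then have "neg_log_scaled e (a + (1 - a) * u) \<le> neg_log_scaled e a"
    and "neg_log_scaled e (a + (1 - a) * u) \<le> neg_log_scaled e u"
    using a u by (auto intro: neg_log_scaled_antimono)
  then show ?thesis using na by simp
qed

text \<open>Conversely a + (1-a) u <= 2 max a u, so the loss is at most e^2 ln 2.\<close>
lemma neg_log_scaled_mix_lower:
  fixes e A u :: real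
  assumes e: "e \<noteq> 0" and A: "0 \<le> A" and u: "0 \<le> u"
  defines "a \<equiv> exp (- A / e\<^sup>2)"
  shows "min (ereal A) (neg_log_scaled e u) \<le> neg_log_scaled e (a + (1 - a) * u) + ereal (e\<^sup>2 * ln 2)"
proof -
  have a: "0 < a" "a \<le> 1" using A unfolding a_def by auto
  have na: "neg_log_scaled e a = ereal A" unfolding a_def by (rule neg_log_scaled_exp[OF e])
  have "min (ereal A) (neg_log_scaled e u) = neg_log_scaled e (max a u)"
    using neg_log_scaled_antimono[of a u e] neg_log_scaled_antimono[of u a e] a u na
    by (auto simp: max_def min_def)
  also have "\<dots> = neg_log_scaled e (2 * max a u) + ereal (e\<^sup>2 * ln 2)"
    using a by (simp add: neg_log_scaled_double)
  also have "\<dots> \<le> neg_log_scaled e (a + (1 - a) * u) + ereal (e\<^sup>2 * ln 2)"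
  proof (intro add_right_mono neg_log_scaled_antimono)
    show "0 \<le> a + (1 - a) * u" using a u by simp
    have "a + (1 - a) * u \<le> a + u" using a u by (simp add: algebra_simps)
    then show "a + (1 - a) * u \<le> 2 * max a u" by linarith
  qed
  finally show ?thesis .
qed

text \<open>If V is squeezed between min A w and min A w - delta with delta -> 0, then
  Limsup V = min A (Limsup w): truncation by A is continuous and monotone, hence commutes with Limsup.\<close>
lemma Limsup_min_sandwich:
  fixes V w :: "'b \<Rightarrow> ereal" and \<delta> :: "'b \<Rightarrow> real"
  assumes F: "F \<noteq> bot" and \<delta>: "(\<delta> \<longlongrightarrow> 0) F"
    and upper: "eventually (\<lambda>e. V e \<le> min (ereal A) (w e)) F"
    and lower: "eventually (\<lambda>e. min (ereal A) (w e) \<le> V e + ereal (\<delta> e)) F"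
  shows "Limsup F V = min (ereal A) (Limsup F w)"
proof -
  have min_commute: "Limsup F (\<lambda>e. min (ereal A) (w e)) = min (ereal A) (Limsup F w)"
    by (rule Limsup_compose_continuous_mono[OF _ _ F])
       (auto intro!: continuous_on_min continuous_on_const continuous_on_id simp: mono_def min_le_iff_disj)
  have "Limsup F V \<le> Limsup F (\<lambda>e. min (ereal A) (w e))"
    by (rule Limsup_mono[OF upper])
  moreover have "Limsup F (\<lambda>e. min (ereal A) (w e)) \<le> Limsup F V"
  proof (rule ereal_le_epsilon2)
    fix d :: real assume "0 < d"
    with \<delta> have "eventually (\<lambda>e. \<delta> e < d) F" by (rule order_tendstoD)
    with lower have "eventually (\<lambda>e. min (ereal A) (w e) \<le> V e + ereal d) F"
      by eventually_elim (meson add_left_mono ereal_less_eq(3) less_imp_le order_trans)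
    then have "Limsup F (\<lambda>e. min (ereal A) (w e)) \<le> Limsup F (\<lambda>e. V e + ereal d)"
      by (rule Limsup_mono)
    also have "\<dots> = Limsup F V + ereal d"
      by (rule Limsup_add_ereal_right[OF F]) simp
    finally show "Limsup F (\<lambda>e. min (ereal A) (w e)) \<le> Limsup F V + ereal d" .
  qed
  ultimately show ?thesis using min_commute by (metis antisym)
qed

section \<open>Measurability of path functionals\<close>

text \<open>A process with continuous paths and measurable marginals, evaluated at a measurable random
  time, is measurable: approximate the time from above on the grids of mesh 1/(n+1).\<close>
lemma measurable_eval_at_random_time:
  fixes Y :: "'a \<Rightarrow> real \<Rightarrow> 'b::metric_space" and \<theta> :: "'a \<Rightarrow> real"
  assumes tT: "t \<le> T"
    and Y_meas: "\<And>s. s \<in> {t..T} \<Longrightarrow> (\<lambda>\<omega>. Y \<omega> s) \<in> borel_measurable M"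
    and Y_cont: "\<And>\<omega>. \<omega> \<in> space M \<Longrightarrow> continuous_on {t..T} (Y \<omega>)"
    and \<theta>_meas: "\<theta> \<in> borel_measurable M"
    and \<theta>_range: "\<And>\<omega>. \<omega> \<in> space M \<Longrightarrow> \<theta> \<omega> \<in> {t..T}"
  shows "(\<lambda>\<omega>. Y \<omega> (\<theta> \<omega>)) \<in> borel_measurable M"
proof -
  define grid where "grid n i = min T (t + real i / real (Suc n))" for n i :: nat
  define k where "k n \<omega> = nat \<lceil>(\<theta> \<omega> - t) * real (Suc n)\<rceil>" for n \<omega>
  have grid_in: "grid n i \<in> {t..T}" for n i unfolding grid_def using tT by auto
  have k_meas: "k n \<in> measurable M (count_space UNIV)" for n
    unfolding k_def using \<theta>_meas by measurable
  have approx_meas: "(\<lambda>\<omega>. Y \<omega> (grid n (k n \<omega>))) \<in> borel_measurable M" for n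
    by (rule measurable_compose_countable[where f="\<lambda>i \<omega>. Y \<omega> (grid n i)", OF _ k_meas])
       (rule Y_meas[OF grid_in])
  have grid_close: "\<theta> \<omega> \<le> grid n (k n \<omega>) \<and> grid n (k n \<omega>) \<le> \<theta> \<omega> + 1 / real (Suc n)"
    if \<omega>: "\<omega> \<in> space M" for n \<omega>
  proof -
    define c where "c = (\<theta> \<omega> - t) * real (Suc n)"
    have "0 \<le> c" unfolding c_def using \<theta>_range[OF \<omega>] by simp
    then have ck: "c \<le> real (k n \<omega>)" "real (k n \<omega>) \<le> c + 1"
      unfolding k_def c_def[symmetric] by linarith+
    have "\<theta> \<omega> - t = c / real (Suc n)"
      unfolding c_def by (simp add: field_simps del: of_nat_Suc)
    also have "\<dots> \<le> real (k n \<omega>) / real (Suc n)"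
      using ck by (simp add: divide_right_mono)
    finally have lo: "\<theta> \<omega> \<le> t + real (k n \<omega>) / real (Suc n)" by simp
    have "real (k n \<omega>) / real (Suc n) \<le> (c + 1) / real (Suc n)"
      using ck by (simp add: divide_right_mono)
    also have "\<dots> = \<theta> \<omega> - t + 1 / real (Suc n)"
      unfolding c_def by (simp add: field_simps del: of_nat_Suc)
    finally have hi: "t + real (k n \<omega>) / real (Suc n) \<le> \<theta> \<omega> + 1 / real (Suc n)" by simp
    from lo hi show ?thesis using \<theta>_range[OF \<omega>] unfolding grid_def by auto
  qed
  have approx_lim: "(\<lambda>n. Y \<omega> (grid n (k n \<omega>))) \<longlonglongrightarrow> Y \<omega> (\<theta> \<omega>)"
    if \<omega>: "\<omega> \<in> space M" for \<omega>
  proof (rule continuous_on_tendsto_compose[OF Y_cont[OF \<omega>] _ \<theta>_range[OF \<omega>]])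
    have upper: "(\<lambda>n. \<theta> \<omega> + 1 / real (Suc n)) \<longlonglongrightarrow> \<theta> \<omega>"
      using tendsto_add[OF tendsto_const LIMSEQ_Suc[OF lim_const_over_n]] by simp
    show "(\<lambda>n. grid n (k n \<omega>)) \<longlonglongrightarrow> \<theta> \<omega>"
      by (rule tendsto_sandwich[OF _ _ tendsto_const upper]) (use grid_close[OF \<omega>] in simp_all)
    show "\<forall>\<^sub>F n in sequentially. grid n (k n \<omega>) \<in> {t..T}"
      using grid_in by simp
  qed
  show ?thesis by (rule borel_measurable_LIMSEQ_metric[OF approx_meas approx_lim])
qed

lemma continuous_crossing_iff_countable:
  fixes f :: "real \<Rightarrow> real"
  assumes f: "continuous_on {t..s} f" and ts: "t \<le> s"
  defines "D \<equiv> {q\<in>\<rat>. t < q \<and> q < s} \<union> {t, s}"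
  shows "(\<exists>u\<in>{t..s}. r \<le> f u) \<longleftrightarrow> (\<forall>n::nat. \<exists>q\<in>D. r - 1 / real (Suc n) < f q)"
proof
  assume "\<exists>u\<in>{t..s}. r \<le> f u"
  then obtain u where u: "u \<in> {t..s}" "r \<le> f u" by auto
  show "\<forall>n::nat. \<exists>q\<in>D. r - 1 / real (Suc n) < f q"
  proof
    fix n :: nat
    obtain d where d: "d > 0"
      and near: "\<And>q. q \<in> {t..s} \<Longrightarrow> dist q u < d \<Longrightarrow> dist (f q) (f u) < 1 / real (Suc n)"
      using f u(1) unfolding continuous_on_iff by (metis of_nat_0_less_iff zero_less_Suc zero_less_divide_1_iff)
    obtain q where q: "q \<in> D" "dist q u < d"
    proof (cases "u = t \<or> u = s")
      case True
      then show ?thesis using that[of u] d unfolding D_def by auto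
    next
      case False
      then have "t < u" "u < s" using u(1) by auto
      moreover obtain q where "q \<in> \<rat>" "max t (u - d) < q" "q < u"
        using Rats_dense_in_real[of "max t (u - d)" u] \<open>t < u\<close> d by auto
      ultimately show ?thesis using that[of q] unfolding D_def by (auto simp: dist_real_def)
    qed
    have "D \<subseteq> {t..s}" unfolding D_def using ts by auto
    then have "dist (f q) (f u) < 1 / real (Suc n)" using near q by auto
    then have "r - 1 / real (Suc n) < f q" using u(2) by (auto simp: dist_real_def)
    then show "\<exists>q\<in>D. r - 1 / real (Suc n) < f q" using q(1) by blast
  qed
next
  assume close: "\<forall>n::nat. \<exists>q\<in>D. r - 1 / real (Suc n) < f q"
  obtain u where u: "u \<in> {t..s}" and u_max: "\<And>y. y \<in> {t..s} \<Longrightarrow> f y \<le> f u"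
    using continuous_attains_sup[OF compact_Icc _ f] ts by auto
  have "r \<le> f u"
  proof (rule ccontr)
    assume "\<not> r \<le> f u"
    then obtain n :: nat where n: "1 / real (Suc n) < r - f u"
      using reals_Archimedean by (metis diff_gt_0_iff_gt inverse_eq_divide not_le)
    obtain q where "q \<in> D" "r - 1 / real (Suc n) < f q" using close by blast
    moreover have "D \<subseteq> {t..s}" unfolding D_def using ts by auto
    ultimately show False using u_max[of q] n by auto
  qed
  then show "\<exists>u\<in>{t..s}. r \<le> f u" using u by auto
qed

lemma sets_level_crossing:
  fixes \<phi> :: "'a \<Rightarrow> real \<Rightarrow> real"
  assumes meas: "\<And>q. q \<in> {t..s} \<Longrightarrow> (\<lambda>\<omega>. \<phi> \<omega> q) \<in> borel_measurable N"
    and cont: "\<And>\<omega>. \<omega> \<in> space N \<Longrightarrow> continuous_on {t..s} (\<phi> \<omega>)"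
  shows "{\<omega>\<in>space N. \<exists>u\<in>{t..s}. r \<le> \<phi> \<omega> u} \<in> sets N"
proof (cases "t \<le> s")
  case ts: True
  define D where "D = {q\<in>\<rat>. t < q \<and> q < s} \<union> {t, s}"
  have "countable D" unfolding D_def by (auto intro!: countable_subset[OF _ countable_rat])
  moreover have "{\<omega>\<in>space N. c < \<phi> \<omega> q} \<in> sets N" if "q \<in> D" for c q
  proof -
    have "q \<in> {t..s}" using that ts unfolding D_def by auto
    then have "Measurable.pred N (\<lambda>\<omega>. c < \<phi> \<omega> q)" using meas by measurable
    then show ?thesis by (simp add: pred_def)
  qed
  ultimately have "(\<Inter>n::nat. \<Union>q\<in>D. {\<omega>\<in>space N. r - 1 / real (Suc n) < \<phi> \<omega> q}) \<in> sets N"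
    by (intro sets.countable_INT sets.countable_UN') auto
  also have "(\<Inter>n::nat. \<Union>q\<in>D. {\<omega>\<in>space N. r - 1 / real (Suc n) < \<phi> \<omega> q})
      = {\<omega>\<in>space N. \<exists>u\<in>{t..s}. r \<le> \<phi> \<omega> u}"
  proof (intro set_eqI iffI)
    fix \<omega> assume "\<omega> \<in> (\<Inter>n::nat. \<Union>q\<in>D. {\<omega>\<in>space N. r - 1 / real (Suc n) < \<phi> \<omega> q})"
    then have \<omega>: "\<omega> \<in> space N" and "\<forall>n::nat. \<exists>q\<in>D. r - 1 / real (Suc n) < \<phi> \<omega> q" by auto
    then show "\<omega> \<in> {\<omega>\<in>space N. \<exists>u\<in>{t..s}. r \<le> \<phi> \<omega> u}"
      using continuous_crossing_iff_countable[OF cont[OF \<omega>] ts, folded D_def] by simp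
  next
    fix \<omega> assume "\<omega> \<in> {\<omega>\<in>space N. \<exists>u\<in>{t..s}. r \<le> \<phi> \<omega> u}"
    then have \<omega>: "\<omega> \<in> space N" and "\<exists>u\<in>{t..s}. r \<le> \<phi> \<omega> u" by auto
    then have "\<forall>n::nat. \<exists>q\<in>D. r - 1 / real (Suc n) < \<phi> \<omega> q"
      using continuous_crossing_iff_countable[OF cont[OF \<omega>] ts, folded D_def] by simp
    then show "\<omega> \<in> (\<Inter>n::nat. \<Union>q\<in>D. {\<omega>\<in>space N. r - 1 / real (Suc n) < \<phi> \<omega> q})"
      using \<omega> by auto
  qed
  finally show ?thesis .
qed simp

section \<open>The first passage time\<close>

definition first_passage :: "(real \<Rightarrow> real) \<Rightarrow> real \<Rightarrow> real \<Rightarrow> real \<Rightarrow> real" where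
  "first_passage f r t T =
     (if {s\<in>{t..T}. r \<le> f s} = {} then T else Inf {s\<in>{t..T}. r \<le> f s})"

text \<open>If the level is reached, the first passage time is a crossing time (the crossing set is
  closed by continuity).\<close>
lemma first_passage_attained:
  assumes f: "continuous_on {t..T} f" and hit: "\<exists>s\<in>{t..T}. r \<le> f s"
  shows "first_passage f r t T \<in> {s\<in>{t..T}. r \<le> f s}"
proof -
  define S where "S = {s\<in>{t..T}. r \<le> f s}"
  have "S = {t..T} \<inter> f -` {r..}" unfolding S_def by auto
  also have "closed \<dots>" by (rule continuous_closed_preimage[OF f]) auto
  finally have "closed S" .
  moreover have "bdd_below S" unfolding S_def by (auto intro: bdd_belowI[where m=t])
  moreover have "S \<noteq> {}" using hit unfolding S_def by auto
  ultimately have "Inf S \<in> S" by (intro closed_contains_Inf)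
  then show ?thesis using \<open>S \<noteq> {}\<close> unfolding first_passage_def S_def[symmetric] by simp
qed

lemma first_passage_no_hit:
  assumes "\<forall>s\<in>{t..T}. f s < r"
  shows "first_passage f r t T = T"
  using assms unfolding first_passage_def by (auto simp: not_le)

lemma first_passage_range:
  assumes f: "continuous_on {t..T} f" and tT: "t \<le> T"
  shows "first_passage f r t T \<in> {t..T}"
proof (cases "\<exists>s\<in>{t..T}. r \<le> f s")
  case True
  then show ?thesis using first_passage_attained[OF f] by blast
next
  case False
  then show ?thesis using first_passage_no_hit[of t T f r] tT by (simp add: not_le)
qed

text \<open>Before the horizon, the first passage has occurred by time s iff the level was reached
  on [t,s]; this is what makes it a stopping time.\<close>
lemma first_passage_le_iff:
  assumes f: "continuous_on {t..T} f" and s: "s < T"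
  shows "first_passage f r t T \<le> s \<longleftrightarrow> (\<exists>u\<in>{t..s}. r \<le> f u)"
proof
  assume le: "first_passage f r t T \<le> s"
  then have "\<not> (\<forall>u\<in>{t..T}. f u < r)" using s first_passage_no_hit[of t T f r] by auto
  then have "first_passage f r t T \<in> {u\<in>{t..T}. r \<le> f u}"
    using first_passage_attained[OF f] by (auto simp: not_less)
  then show "\<exists>u\<in>{t..s}. r \<le> f u" using le by auto
next
  assume "\<exists>u\<in>{t..s}. r \<le> f u"
  then obtain u where u: "u \<in> {t..s}" "r \<le> f u" by auto
  then have uS: "u \<in> {s\<in>{t..T}. r \<le> f s}" using s by auto
  moreover have "bdd_below {s\<in>{t..T}. r \<le> f s}" by (auto intro: bdd_belowI[where m=t])
  ultimately have "Inf {s\<in>{t..T}. r \<le> f s} \<le> u" by (rule cInf_lower)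
  moreover have "{s\<in>{t..T}. r \<le> f s} \<noteq> {}" using uS by blast
  ultimately show "first_passage f r t T \<le> s" using u unfolding first_passage_def by auto
qed

lemma stopping_time_first_passage:
  fixes \<phi> :: "'a \<Rightarrow> real \<Rightarrow> real"
  assumes F: "filtration \<Omega> F"
    and adapted: "\<And>q. q \<in> {t..T} \<Longrightarrow> (\<lambda>\<omega>. \<phi> \<omega> q) \<in> borel_measurable (F q)"
    and cont: "\<And>\<omega>. \<omega> \<in> \<Omega> \<Longrightarrow> continuous_on {t..T} (\<phi> \<omega>)"
    and tT: "t \<le> T"
  shows "stopping_time F (\<lambda>\<omega>. first_passage (\<phi> \<omega>) r t T)"
proof
  fix s
  have space: "space (F s) = \<Omega>" by (rule filtration.space_F[OF F])
  show "Measurable.pred (F s) (\<lambda>\<omega>. first_passage (\<phi> \<omega>) r t T \<le> s)"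
  proof (cases "T \<le> s")
    case True
    have "first_passage (\<phi> \<omega>) r t T \<le> s" if "\<omega> \<in> space (F s)" for \<omega>
      using first_passage_range[OF cont tT, of \<omega> r] that space True by auto
    then have "{\<omega>\<in>space (F s). first_passage (\<phi> \<omega>) r t T \<le> s} = space (F s)" by blast
    then show ?thesis by (simp add: pred_def)
  next
    case False
    have "(\<lambda>\<omega>. \<phi> \<omega> q) \<in> borel_measurable (F s)" if "q \<in> {t..s}" for q
    proof (rule measurable_from_subalg[OF _ adapted])
      show "subalgebra (F s) (F q)"
        using that filtration.sets_F_mono[OF F] space filtration.space_F[OF F] by (simp add: subalgebra_def)
    qed (use that False in auto)
    then have "{\<omega>\<in>space (F s). \<exists>u\<in>{t..s}. r \<le> \<phi> \<omega> u} \<in> sets (F s)"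
      using cont space False
      by (intro sets_level_crossing) (auto intro: continuous_on_subset[of "{t..T}"])
    moreover have "first_passage (\<phi> \<omega>) r t T \<le> s \<longleftrightarrow> (\<exists>u\<in>{t..s}. r \<le> \<phi> \<omega> u)"
      if "\<omega> \<in> space (F s)" for \<omega>
      using first_passage_le_iff[OF cont, of \<omega> s r] that False space by simp
    then have "{\<omega>\<in>space (F s). first_passage (\<phi> \<omega>) r t T \<le> s} =
        {\<omega>\<in>space (F s). \<exists>u\<in>{t..s}. r \<le> \<phi> \<omega> u}" by blast
    ultimately show ?thesis by (simp add: pred_def)
  qed
qed

section \<open>Optimal stopping below a barrier\<close>

lemma (in prob_space) integral_affine_indicator:
  assumes "E \<in> events"
  shows "(\<integral>\<omega>. a + (1 - a) * indicator E \<omega> \<partial>M) = a + (1 - a) * prob E"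
proof -
  have "integrable M (\<lambda>\<omega>. (1 - a) * indicator E \<omega>)"
    using assms by (intro integrable_mult_right integrable_real_indicator) (auto simp: less_top[symmetric])
  then show ?thesis using assms by (simp add: prob_space)
qed

lemma sets_survival_event:
  fixes \<phi> :: "'a \<Rightarrow> real \<Rightarrow> real"
  assumes meas: "\<And>q. q \<in> {t..T} \<Longrightarrow> (\<lambda>\<omega>. \<phi> \<omega> q) \<in> borel_measurable M"
    and cont: "\<And>\<omega>. \<omega> \<in> space M \<Longrightarrow> continuous_on {t..T} (\<phi> \<omega>)"
  shows "{\<omega>\<in>space M. \<forall>s\<in>{t..T}. \<phi> \<omega> s < r} \<in> sets M"
proof -
  have "space M - {\<omega>\<in>space M. \<exists>u\<in>{t..T}. r \<le> \<phi> \<omega> u} \<in> sets M"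
    using sets_level_crossing[OF meas cont] by auto
  also have "space M - {\<omega>\<in>space M. \<exists>u\<in>{t..T}. r \<le> \<phi> \<omega> u} = {\<omega>\<in>space M. \<forall>s\<in>{t..T}. \<phi> \<omega> s < r}"
    by (auto simp: not_le)
  finally show ?thesis .
qed

text \<open>Every random time in [t,T] earns at least a + (1-a) P(E): on E the payoff is 1, elsewhere
  it is at least a.\<close>
lemma (in prob_space) integral_barrier_payoff_ge:
  fixes \<phi> :: "'a \<Rightarrow> real \<Rightarrow> real" and r a :: real
  assumes meas: "\<And>q. q \<in> {t..T} \<Longrightarrow> (\<lambda>\<omega>. \<phi> \<omega> q) \<in> borel_measurable M"
    and cont: "\<And>\<omega>. \<omega> \<in> space M \<Longrightarrow> continuous_on {t..T} (\<phi> \<omega>)"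
    and tT: "t \<le> T" and a: "0 \<le> a" "a \<le> 1"
    and \<theta>_meas: "\<theta> \<in> borel_measurable M"
    and \<theta>_range: "\<And>\<omega>. \<omega> \<in> space M \<Longrightarrow> \<theta> \<omega> \<in> {t..T}"
  defines "E \<equiv> {\<omega>\<in>space M. \<forall>s\<in>{t..T}. \<phi> \<omega> s < r}"
  shows "a + (1 - a) * prob E \<le> (\<integral>\<omega>. (if \<phi> \<omega> (\<theta> \<omega>) < r then 1 else a) \<partial>M)"
proof -
  have E: "E \<in> events" unfolding E_def by (rule sets_survival_event[OF meas cont])
  have "(\<lambda>\<omega>. \<phi> \<omega> (\<theta> \<omega>)) \<in> borel_measurable M"
    by (rule measurable_eval_at_random_time[OF tT meas cont \<theta>_meas \<theta>_range])
  moreover have "(\<lambda>x::real. if x < r then 1 else a) \<in> borel_measurable borel" by measurable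
  ultimately have "(\<lambda>\<omega>. if \<phi> \<omega> (\<theta> \<omega>) < r then 1 else a) \<in> borel_measurable M"
    by (rule measurable_compose)
  then have payoff_int: "integrable M (\<lambda>\<omega>. if \<phi> \<omega> (\<theta> \<omega>) < r then 1 else a)"
    by (intro integrable_const_bound[where B=1]) (use a in auto)
  have "a + (1 - a) * prob E = (\<integral>\<omega>. a + (1 - a) * indicator E \<omega> \<partial>M)"
    by (rule integral_affine_indicator[OF E, symmetric])
  also have "\<dots> \<le> (\<integral>\<omega>. (if \<phi> \<omega> (\<theta> \<omega>) < r then 1 else a) \<partial>M)"
  proof (rule integral_mono[OF _ payoff_int])
    show "integrable M (\<lambda>\<omega>. a + (1 - a) * indicator E \<omega>)"
      using E by (intro Bochner_Integration.integrable_add integrable_mult_right integrable_real_indicator)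
        (auto simp: less_top[symmetric])
    show "a + (1 - a) * indicator E \<omega> \<le> (if \<phi> \<omega> (\<theta> \<omega>) < r then 1 else a)" if "\<omega> \<in> space M" for \<omega>
      using \<theta>_range[OF that] a unfolding E_def by (cases "\<omega> \<in> E") (auto simp: E_def)
  qed
  finally show ?thesis .
qed

text \<open>Stopping at the first passage earns exactly a + (1-a) P(E): on E the path never
  crosses, off E it is stopped at a crossing point.\<close>
lemma (in prob_space) integral_barrier_payoff_first_passage:
  fixes \<phi> :: "'a \<Rightarrow> real \<Rightarrow> real" and r a :: real
  assumes meas: "\<And>q. q \<in> {t..T} \<Longrightarrow> (\<lambda>\<omega>. \<phi> \<omega> q) \<in> borel_measurable M"
    and cont: "\<And>\<omega>. \<omega> \<in> space M \<Longrightarrow> continuous_on {t..T} (\<phi> \<omega>)"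
    and tT: "t \<le> T"
  defines "E \<equiv> {\<omega>\<in>space M. \<forall>s\<in>{t..T}. \<phi> \<omega> s < r}"
    and "\<tau> \<equiv> \<lambda>\<omega>. first_passage (\<phi> \<omega>) r t T"
  shows "(\<integral>\<omega>. (if \<phi> \<omega> (\<tau> \<omega>) < r then 1 else a) \<partial>M) = a + (1 - a) * prob E"
proof -
  have E: "E \<in> events" unfolding E_def by (rule sets_survival_event[OF meas cont])
  have "(if \<phi> \<omega> (\<tau> \<omega>) < r then 1 else a) = a + (1 - a) * indicator E \<omega>" if \<omega>: "\<omega> \<in> space M" for \<omega>
  proof (cases "\<omega> \<in> E")
    case True
    then show ?thesis using first_passage_no_hit[of t T "\<phi> \<omega>" r] tT \<omega> unfolding E_def \<tau>_def by auto
  next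
    case False
    then have "\<exists>s\<in>{t..T}. r \<le> \<phi> \<omega> s" using \<omega> unfolding E_def by (auto simp: not_less)
    then have "r \<le> \<phi> \<omega> (\<tau> \<omega>)" using first_passage_attained[OF cont[OF \<omega>]] unfolding \<tau>_def by blast
    then show ?thesis using False by simp
  qed
  then have "(\<integral>\<omega>. (if \<phi> \<omega> (\<tau> \<omega>) < r then 1 else a) \<partial>M) = (\<integral>\<omega>. a + (1 - a) * indicator E \<omega> \<partial>M)"
    by (intro Bochner_Integration.integral_cong) simp_all
  also have "\<dots> = a + (1 - a) * prob E" by (rule integral_affine_indicator[OF E])
  finally show ?thesis .
qed

lemma INF_barrier_payoff:
  fixes \<phi> :: "'a \<Rightarrow> real \<Rightarrow> real"
  assumes M: "prob_space M"
    and F: "filtration (space M) F" "\<And>s. sets (F s) \<subseteq> sets M"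
    and adapted: "\<And>q. q \<in> {t..T} \<Longrightarrow> (\<lambda>\<omega>. \<phi> \<omega> q) \<in> borel_measurable (F q)"
    and cont: "\<And>\<omega>. \<omega> \<in> space M \<Longrightarrow> continuous_on {t..T} (\<phi> \<omega>)"
    and tT: "t \<le> T" and a: "0 \<le> a" "a \<le> 1"
  shows "(INF \<theta>\<in>stopping_times_in M F t T. \<integral>\<omega>. (if \<phi> \<omega> (\<theta> \<omega>) < r then 1 else a) \<partial>M)
    = a + (1 - a) * measure M {\<omega>\<in>space M. \<forall>s\<in>{t..T}. \<phi> \<omega> s < r}"
proof (rule cInf_eq_minimum)
  interpret prob_space M by (rule M)
  have space: "space (F s) = space M" for s by (rule filtration.space_F[OF F(1)])
  have meas: "(\<lambda>\<omega>. \<phi> \<omega> q) \<in> borel_measurable M" if "q \<in> {t..T}" for q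
    using measurable_from_subalg[OF _ adapted[OF that]] F(2) space by (simp add: subalgebra_def)
  define \<tau> where "\<tau> \<omega> = first_passage (\<phi> \<omega>) r t T" for \<omega>
  have "stopping_time F \<tau>" unfolding \<tau>_def by (rule stopping_time_first_passage[OF F(1) adapted cont tT])
  then have \<tau>_adm: "\<tau> \<in> stopping_times_in M F t T"
    using first_passage_range[OF cont tT] unfolding stopping_times_in_def \<tau>_def by auto
  have \<tau>_value: "(\<integral>\<omega>. (if \<phi> \<omega> (\<tau> \<omega>) < r then 1 else a) \<partial>M)
      = a + (1 - a) * measure M {\<omega>\<in>space M. \<forall>s\<in>{t..T}. \<phi> \<omega> s < r}"
    unfolding \<tau>_def by (rule integral_barrier_payoff_first_passage[OF meas cont tT])
  show "a + (1 - a) * measure M {\<omega>\<in>space M. \<forall>s\<in>{t..T}. \<phi> \<omega> s < r}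
      \<in> (\<lambda>\<theta>. \<integral>\<omega>. (if \<phi> \<omega> (\<theta> \<omega>) < r then 1 else a) \<partial>M) ` stopping_times_in M F t T"
    using \<tau>_adm \<tau>_value[symmetric] by blast
  fix y assume "y \<in> (\<lambda>\<theta>. \<integral>\<omega>. (if \<phi> \<omega> (\<theta> \<omega>) < r then 1 else a) \<partial>M) ` stopping_times_in M F t T"
  then obtain \<theta> where \<theta>: "\<theta> \<in> stopping_times_in M F t T"
    and y: "y = (\<integral>\<omega>. (if \<phi> \<omega> (\<theta> \<omega>) < r then 1 else a) \<partial>M)" by auto
  have "stopping_time F \<theta>" using \<theta> unfolding stopping_times_in_def by simp
  then have "\<theta> \<in> borel_measurable M" by (rule measurable_stopping_time[OF _ F(2) space])
  then show "a + (1 - a) * measure M {\<omega>\<in>space M. \<forall>s\<in>{t..T}. \<phi> \<omega> s < r} \<le> y"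
    unfolding y using \<theta> unfolding stopping_times_in_def
    by (intro integral_barrier_payoff_ge[OF meas cont tT a]) auto
qed

text \<open>For a continuous path on a compact interval the supremum is attained, so the sup-norm
  bound is strict iff it is strict pointwise.\<close>
lemma SUP_less_iff_continuous:
  fixes f :: "real \<Rightarrow> real"
  assumes f: "continuous_on {t..T} f" and tT: "t \<le> T"
  shows "(SUP s\<in>{t..T}. f s) < r \<longleftrightarrow> (\<forall>s\<in>{t..T}. f s < r)"
proof -
  obtain u where u: "u \<in> {t..T}" and u_max: "\<And>s. s \<in> {t..T} \<Longrightarrow> f s \<le> f u"
    using continuous_attains_sup[OF compact_Icc _ f] tT by auto
  have "(SUP s\<in>{t..T}. f s) = f u" by (rule cSup_eq_maximum) (use u u_max in auto)
  then show ?thesis using u by (auto intro: le_less_trans[OF u_max])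
qed

lemma psiA_eq_barrier_payoff:
  assumes "s \<in> {0..T}" "y \<in> closure Om"
  shows "psiA T Om g0 r A e (s, y) = (if norm (y - g0 s) < r then 1 else exp (- A / e\<^sup>2))"
  using assms by (auto simp: psiA_def tube_compl_def tube_def indicator_def)

lemma INF_psiA_eq_survival:
  fixes Y :: "'a \<Rightarrow> real \<Rightarrow> real^'n" and g0 :: "real \<Rightarrow> real^'n"
  assumes M: "prob_space M"
    and F: "filtration (space M) F" "\<forall>s. sets (F s) \<subseteq> sets M"
    and Y_adapted: "\<forall>s\<in>{t..T}. (\<lambda>\<omega>. Y \<omega> s) \<in> borel_measurable (F s)"
    and Y_paths: "\<forall>\<omega>\<in>space M. continuous_on {t..T} (Y \<omega>) \<and> (\<forall>s\<in>{t..T}. Y \<omega> s \<in> closure Om)"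
    and g0: "continuous_on {0..T} g0"
    and A: "0 \<le> A" and t: "t \<in> {0..T}"
  shows "(INF \<theta>\<in>stopping_times_in M F t T. \<integral>\<omega>. psiA T Om g0 r A e (\<theta> \<omega>, Y \<omega> (\<theta> \<omega>)) \<partial>M)
    = exp (- A / e\<^sup>2) + (1 - exp (- A / e\<^sup>2)) *
        measure M {\<omega>\<in>space M. (SUP s\<in>{t..T}. norm (Y \<omega> s - g0 s)) < r}"
proof -
  define \<phi> where "\<phi> \<omega> s = norm (Y \<omega> s - g0 s)" for \<omega> s
  have tT: "t \<le> T" using t by simp
  have \<phi>_cont: "continuous_on {t..T} (\<phi> \<omega>)" if "\<omega> \<in> space M" for \<omega>
    unfolding \<phi>_def using Y_paths that continuous_on_subset[OF g0, of "{t..T}"] t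
    by (intro continuous_intros) auto
  have \<phi>_adapted: "(\<lambda>\<omega>. \<phi> \<omega> q) \<in> borel_measurable (F q)" if "q \<in> {t..T}" for q
  proof -
    have "(\<lambda>\<omega>. Y \<omega> q) \<in> borel_measurable (F q)" using Y_adapted that by simp
    then show ?thesis unfolding \<phi>_def by measurable
  qed
  have "(INF \<theta>\<in>stopping_times_in M F t T. \<integral>\<omega>. psiA T Om g0 r A e (\<theta> \<omega>, Y \<omega> (\<theta> \<omega>)) \<partial>M)
      = (INF \<theta>\<in>stopping_times_in M F t T. \<integral>\<omega>. (if \<phi> \<omega> (\<theta> \<omega>) < r then 1 else exp (- A / e\<^sup>2)) \<partial>M)"
  proof (intro INF_cong refl Bochner_Integration.integral_cong)
    fix \<theta> \<omega> assume "\<theta> \<in> stopping_times_in M F t T" "\<omega> \<in> space M"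
    then have "\<theta> \<omega> \<in> {0..T}" "Y \<omega> (\<theta> \<omega>) \<in> closure Om"
      using Y_paths t unfolding stopping_times_in_def by auto
    then show "psiA T Om g0 r A e (\<theta> \<omega>, Y \<omega> (\<theta> \<omega>)) = (if \<phi> \<omega> (\<theta> \<omega>) < r then 1 else exp (- A / e\<^sup>2))"
      unfolding \<phi>_def by (rule psiA_eq_barrier_payoff)
  qed
  also have "\<dots> = exp (- A / e\<^sup>2) + (1 - exp (- A / e\<^sup>2)) * measure M {\<omega>\<in>space M. \<forall>s\<in>{t..T}. \<phi> \<omega> s < r}"
    using A by (intro INF_barrier_payoff[OF M F(1) _ \<phi>_adapted \<phi>_cont tT]) (auto simp: F(2))
  also have "{\<omega>\<in>space M. \<forall>s\<in>{t..T}. \<phi> \<omega> s < r} = {\<omega>\<in>space M. (SUP s\<in>{t..T}. norm (Y \<omega> s - g0 s)) < r}"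
    using SUP_less_iff_continuous[OF \<phi>_cont tT] unfolding \<phi>_def by auto
  finally show ?thesis .
qed

theorem mainTheorem4:
  fixes M :: "'a measure" and F :: "real \<Rightarrow> 'a measure" and W :: "'a \<Rightarrow> real \<Rightarrow> real^'m"
    and Om :: "(real^'n) set" and \<gamma> :: "real^'n \<Rightarrow> real^'n"
    and b :: "real \<Rightarrow> real \<Rightarrow> real^'n \<Rightarrow> real^'n"
    and \<sigma> :: "real \<Rightarrow> real \<Rightarrow> real^'n \<Rightarrow> real^'m^'n"
    and X :: "real \<Rightarrow> real \<Rightarrow> real^'n \<Rightarrow> 'a \<Rightarrow> real \<Rightarrow> real^'n"
    and g0 :: "real \<Rightarrow> real^'n"
    and T r A t :: real and x :: "real^'n"
  assumes M: "prob_space M"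
    and F: "filtration (space M) F" "\<forall>s. sets (F s) \<subseteq> sets M"
    and BM: "brownian_motion M F W"
    and dom: "W2inf_domain Om"
    and gamma_lip: "\<exists>L. L-lipschitz_on UNIV \<gamma>"
    and gamma_n: "\<exists>c0>0. \<forall>y \<nu>. unit_outward_normal Om y \<nu> \<longrightarrow> \<gamma> y \<bullet> \<nu> \<ge> c0"
    and b_reg: "\<forall>\<epsilon>>0. continuous_on ({0..T} \<times> UNIV) (\<lambda>(s, y). b \<epsilon> s y) \<and>
                  (\<exists>L. \<forall>s\<in>{0..T}. L-lipschitz_on UNIV (b \<epsilon> s))"
    and sigma_reg: "\<forall>\<epsilon>>0. continuous_on ({0..T} \<times> UNIV) (\<lambda>(s, y). \<sigma> \<epsilon> s y) \<and>
                  (\<exists>L. \<forall>s\<in>{0..T}. L-lipschitz_on UNIV (\<sigma> \<epsilon> s))"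
    and X_sol: "\<forall>\<epsilon>>0. \<forall>t'\<in>{0..T}. \<forall>x'\<in>closure Om.
                  reflected_sde_solution M F W Om \<gamma> (b \<epsilon>) (\<sigma> \<epsilon>) \<epsilon> t' T x' (X \<epsilon> t' x')"
    and g0: "continuous_on {0..T} g0" "\<forall>s\<in>{0..T}. g0 s \<in> closure Om"
    and r: "r > 0"
    and A: "A > 0"
    and tx: "t \<in> {0..T}" "x \<in> closure Om"
  shows "Limsup (at_right 0) (\<lambda>\<epsilon>. neg_log_scaled \<epsilon>
            (INF \<theta>\<in>stopping_times_in M F t T.
               integral\<^sup>L M (\<lambda>\<omega>. psiA T Om g0 r A \<epsilon> (\<theta> \<omega>, X \<epsilon> t x \<omega> (\<theta> \<omega>)))))
       = min (ereal A) (Limsup (at_right 0) (\<lambda>\<epsilon>. neg_log_scaled \<epsilon>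
            (measure M {\<omega>\<in>space M. (SUP s\<in>{t..T}. norm (X \<epsilon> t x \<omega> s - g0 s)) < r})))"
proof -
  define u where "u e = measure M {\<omega>\<in>space M. (SUP s\<in>{t..T}. norm (X e t x \<omega> s - g0 s)) < r}" for e
  define V where "V e = neg_log_scaled e (INF \<theta>\<in>stopping_times_in M F t T.
      integral\<^sup>L M (\<lambda>\<omega>. psiA T Om g0 r A e (\<theta> \<omega>, X e t x \<omega> (\<theta> \<omega>))))" for e
  have u: "0 \<le> u e" "u e \<le> 1" for e unfolding u_def using prob_space.prob_le_1[OF M] by auto
  have V_eq: "V e = neg_log_scaled e (exp (- A / e\<^sup>2) + (1 - exp (- A / e\<^sup>2)) * u e)" if "e > 0" for e
  proof -
    have "reflected_sde_solution M F W Om \<gamma> (b e) (\<sigma> e) e t T x (X e t x)" using X_sol that tx by auto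
    then have "\<forall>s\<in>{t..T}. (\<lambda>\<omega>. X e t x \<omega> s) \<in> borel_measurable (F s)"
      "\<forall>\<omega>\<in>space M. continuous_on {t..T} (X e t x \<omega>) \<and> (\<forall>s\<in>{t..T}. X e t x \<omega> s \<in> closure Om)"
      unfolding reflected_sde_solution_def by auto
    then show ?thesis unfolding V_def u_def
      using INF_psiA_eq_survival[OF M F _ _ g0(1) _ tx(1)] A by simp
  qed
  have "\<forall>\<^sub>F e in at_right 0. V e \<le> min (ereal A) (neg_log_scaled e (u e))"
    using eventually_at_right_less by eventually_elim (use V_eq neg_log_scaled_mix_upper A u in auto)
  moreover have "\<forall>\<^sub>F e in at_right 0. min (ereal A) (neg_log_scaled e (u e)) \<le> V e + ereal (e\<^sup>2 * ln 2)"
    using eventually_at_right_less by eventually_elim (use V_eq neg_log_scaled_mix_lower A u in auto)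
  moreover have "((\<lambda>e::real. e\<^sup>2 * ln 2) \<longlongrightarrow> 0\<^sup>2 * ln 2) (at_right 0)"
    by (intro tendsto_intros)
  ultimately show ?thesis unfolding V_def[symmetric] u_def[symmetric]
    by (intro Limsup_min_sandwich) simp_all
qed

end
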